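(* For every $\kappa,\lambda\in(0,1)$, the measure rule LB-NxM$(\kappa,\lambda)$ is $\zeta$-slick for $\zeta=1/(\kappa n)$: for all neighboring samples $S,S'\in(\mathcal{X}\times\{\pm1\})^n$ and every finite sequence of hypotheses $H=(h_1,\dots,h_t)$ with $h_j:\mathcal X\to[-1,1]$, letting $\hat\mu$ and $\hat\mu'$ be the distributions output by LB-NxM on $(S,H)$ and $(S',H)$, we have $\Delta(\hat\mu,\hat\mu')\le\frac{1}{\kappa n}$.
   Context: Neighboring samples differ in at most one position. $\Delta(Y,Z)=\max_A|\Pr[Y\in A]-\Pr[Z\in A]|$ is statistical distance. Measures on $[n]$: $\mu:[n]\to[0,1]$, $|\mu|=\sum_i\mu(i)$, $d(\mu)=|\mu|/n$, $\hat\mu=\mu/|\mu|$, $\mathrm{KL}(\mu_1\|\mu_2)=\sum_i\mu_1(i)\log(\mu_1(i)/\mu_2(i))+\mu_2(i)-\mu_1(i)$, $\Gamma_\kappa=\{\mu:d(\mu)\ge\kappa\}$, $\Pi_{\Gamma_\kappa}\tilde\mu=\arg\min_{\mu\in\Gamma_\kappa}\mathrm{KL}(\mu\|\tilde\mu)$. LB-NxM$(\kappa,\lambda)$ on $S=((x_i,y_i))_{i=1}^n$ and $h_1,\dots,h_t$: $\ell_j(i)=1-\frac12|h_j(x_i)-y_i|$, $\tilde\mu(i)=\kappa e^{-\lambda\sum_{j=1}^t\ell_j(i)}$, $\mu=\Pi_{\Gamma_\kappa}\tilde\mu$, output $\hat\mu$. *)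

theory Defs
  imports Complex_Main
begin

text \<open>Measures on [n] = {1..n}: functions nat => real with values in [0,1] on {1..n}
  and zero outside (the zero-outside convention makes the representation canonical).\<close>
definition measures :: "nat \<Rightarrow> (nat \<Rightarrow> real) set" where
  "measures n = {\<mu>. (\<forall>i\<in>{1..n}. 0 \<le> \<mu> i \<and> \<mu> i \<le> 1) \<and> (\<forall>i. i \<notin> {1..n} \<longrightarrow> \<mu> i = 0)}"

definition msize :: "nat \<Rightarrow> (nat \<Rightarrow> real) \<Rightarrow> real" where
  "msize n \<mu> = (\<Sum>i\<in>{1..n}. \<mu> i)"

definition density :: "nat \<Rightarrow> (nat \<Rightarrow> real) \<Rightarrow> real" where
  "density n \<mu> = msize n \<mu> / real n"

definition normalize :: "nat \<Rightarrow> (nat \<Rightarrow> real) \<Rightarrow> (nat \<Rightarrow> real)" where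
  "normalize n \<mu> = (\<lambda>i. \<mu> i / msize n \<mu>)"

definition KL :: "nat \<Rightarrow> (nat \<Rightarrow> real) \<Rightarrow> (nat \<Rightarrow> real) \<Rightarrow> real" where
  "KL n \<mu>1 \<mu>2 = (\<Sum>i\<in>{1..n}.
      (if \<mu>1 i = 0 then 0 else \<mu>1 i * ln (\<mu>1 i / \<mu>2 i)) + \<mu>2 i - \<mu>1 i)"

definition Gamma :: "nat \<Rightarrow> real \<Rightarrow> (nat \<Rightarrow> real) set" where
  "Gamma n \<kappa> = {\<mu> \<in> measures n. density n \<mu> \<ge> \<kappa>}"

definition proj_Gamma :: "nat \<Rightarrow> real \<Rightarrow> (nat \<Rightarrow> real) \<Rightarrow> (nat \<Rightarrow> real)" where
  "proj_Gamma n \<kappa> \<mu>t = (SOME \<mu>. \<mu> \<in> Gamma n \<kappa> \<and>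
      (\<forall>\<nu>\<in>Gamma n \<kappa>. KL n \<mu> \<mu>t \<le> KL n \<nu> \<mu>t))"

definition LB_NxM :: "real \<Rightarrow> real \<Rightarrow> nat \<Rightarrow> (nat \<Rightarrow> 'x \<times> real) \<Rightarrow> ('x \<Rightarrow> real) list
    \<Rightarrow> (nat \<Rightarrow> real)" where
  "LB_NxM \<kappa> lam n S hs =
    (let loss = (\<lambda>h i. 1 - \<bar>h (fst (S i)) - snd (S i)\<bar> / 2);
         \<mu>t = (\<lambda>i. if i \<in> {1..n} then \<kappa> * exp (- lam * (\<Sum>h\<leftarrow>hs. loss h i)) else 0);
         \<mu> = proj_Gamma n \<kappa> \<mu>t
     in normalize n \<mu>)"

definition stat_dist :: "nat \<Rightarrow> (nat \<Rightarrow> real) \<Rightarrow> (nat \<Rightarrow> real) \<Rightarrow> real" where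
  "stat_dist n p q = Max ((\<lambda>A. \<bar>(\<Sum>i\<in>A. p i) - (\<Sum>i\<in>A. q i)\<bar>) ` Pow {1..n})"

definition neighboring :: "nat \<Rightarrow> (nat \<Rightarrow> 'a) \<Rightarrow> (nat \<Rightarrow> 'a) \<Rightarrow> bool" where
  "neighboring n S S' = (card {i\<in>{1..n}. S i \<noteq> S' i} \<le> 1)"

definition valid_sample :: "nat \<Rightarrow> (nat \<Rightarrow> 'x \<times> real) \<Rightarrow> bool" where
  "valid_sample n S = (\<forall>i\<in>{1..n}. snd (S i) \<in> {-1, 1})"

end

theory Submission
  imports Defs
begin

text \<open>
  For weights \<open>0 < a i \<le> \<kappa>\<close>, the KL projection onto \<open>\<Gamma>\<^sub>\<kappa>\<close> is a capped scaling
  \<open>\<nu> i = min 1 (c * a i)\<close> with \<open>c \<ge> 1\<close> and total mass exactly \<open>\<kappa> n\<close>: for \<open>x \<le> 1\<close> one has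
  \<open>ln c * (x - \<nu> i) \<le> ln (\<nu> i / a i) * (x - \<nu> i)\<close> (the KKT conditions), so for every \<open>\<mu> \<in> \<Gamma>\<^sub>\<kappa>\<close>
  the difference \<open>KL(\<mu>\<parallel>a) - KL(\<nu>\<parallel>a)\<close> dominates the pointwise divergences of \<open>\<mu>\<close> from \<open>\<nu>\<close>.
  Neighbouring samples yield weights that differ at a single index \<open>j\<close>; if \<open>c' \<le> c\<close>, the
  projection \<open>\<nu>'\<close> lies below \<open>\<nu>\<close> off \<open>j\<close>. As both have mass \<open>\<kappa> n\<close>, every subset sum of
  \<open>\<nu> - \<nu>'\<close> is bounded in absolute value by \<open>\<bar>\<nu> j - \<nu>' j\<bar> \<le> 1\<close>, and normalizing
  divides by \<open>\<kappa> n\<close>.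
\<close>

definition kl_point :: "real \<Rightarrow> real \<Rightarrow> real" where
  "kl_point x y = (if x = 0 then 0 else x * ln (x / y)) + y - x"

lemma KL_eq_sum_kl_point: "KL n \<mu> \<nu> = (\<Sum>i\<in>{1..n}. kl_point (\<mu> i) (\<nu> i))"
  by (simp add: KL_def kl_point_def)

lemma kl_point_nonneg:
  assumes "0 < y" "0 \<le> x"
  shows "0 \<le> kl_point x y"
proof (cases "x = 0")
  case False
  with assms have x: "0 < x" by simp
  have "ln (y / x) \<le> y / x - 1" using x assms by (intro ln_le_minus_one) simp
  then have "x * ln (y / x) \<le> y - x" using x by (simp add: field_simps)
  then show ?thesis using x assms by (simp add: kl_point_def ln_div algebra_simps)
qed (use assms in \<open>simp add: kl_point_def\<close>)

lemma kl_point_le_0_imp_eq: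
  assumes "0 < y" "0 \<le> x" "kl_point x y \<le> 0"
  shows "x = y"
proof (cases "x = 0")
  case False
  with assms have x: "0 < x" by simp
  have "y - x \<le> x * ln (y / x)" using x assms by (simp add: kl_point_def ln_div algebra_simps)
  then have "y / x - 1 \<le> ln (y / x)" using x by (simp add: field_simps)
  with ln_le_minus_one[of "y / x"] have "ln (y / x) = y / x - 1" using x assms by simp
  then have "y / x = 1" using ln_eq_minus_one[of "y / x"] x assms by simp
  then show ?thesis using x by simp
qed (use assms in \<open>simp add: kl_point_def\<close>)

lemma kl_point_diff:
  assumes "0 < a" "0 < y" "0 \<le> x"
  shows "kl_point x a - kl_point y a = kl_point x y + ln (y / a) * (x - y)"
  using assms by (cases "x = 0") (auto simp: kl_point_def ln_div algebra_simps)

lemma measures_eqI: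
  assumes "\<mu> \<in> measures n" "\<nu> \<in> measures n" "\<And>i. i \<in> {1..n} \<Longrightarrow> \<mu> i = \<nu> i"
  shows "\<mu> = \<nu>"
proof
  fix i show "\<mu> i = \<nu> i"
    using assms by (cases "i \<in> {1..n}") (auto simp: measures_def)
qed

lemma mem_Gamma_iff:
  assumes "0 < n"
  shows "\<mu> \<in> Gamma n \<kappa> \<longleftrightarrow> \<mu> \<in> measures n \<and> \<kappa> * n \<le> msize n \<mu>"
  using assms by (auto simp: Gamma_def density_def field_simps)

lemma proj_Gamma_eqI:
  assumes "\<nu> \<in> Gamma n \<kappa>"
    and "\<And>\<mu>. \<mu> \<in> Gamma n \<kappa> \<Longrightarrow> KL n \<nu> a \<le> KL n \<mu> a"
    and "\<And>\<mu>. \<mu> \<in> Gamma n \<kappa> \<Longrightarrow> KL n \<mu> a \<le> KL n \<nu> a \<Longrightarrow> \<mu> = \<nu>"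
  shows "proj_Gamma n \<kappa> a = \<nu>"
proof -
  have "proj_Gamma n \<kappa> a \<in> Gamma n \<kappa> \<and>
      (\<forall>\<mu>\<in>Gamma n \<kappa>. KL n (proj_Gamma n \<kappa> a) a \<le> KL n \<mu> a)"
    unfolding proj_Gamma_def by (rule someI[of _ \<nu>]) (use assms in blast)
  with assms show ?thesis by blast
qed

definition capped_scaling :: "nat \<Rightarrow> real \<Rightarrow> (nat \<Rightarrow> real) \<Rightarrow> nat \<Rightarrow> real" where
  "capped_scaling n c a i = (if i \<in> {1..n} then min 1 (c * a i) else 0)"

lemma msize_capped_scaling: "msize n (capped_scaling n c a) = (\<Sum>i\<in>{1..n}. min 1 (c * a i))"
  by (simp add: msize_def capped_scaling_def)

lemma capped_scaling_in_measures:
  assumes "\<forall>i\<in>{1..n}. 0 \<le> a i" "0 \<le> c"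
  shows "capped_scaling n c a \<in> measures n"
  using assms by (auto simp: measures_def capped_scaling_def)

lemma capped_scaling_mono:
  assumes "c' \<le> c" "0 \<le> a i" "a' i = a i"
  shows "capped_scaling n c' a' i \<le> capped_scaling n c a i"
  using assms by (simp add: capped_scaling_def min_le_iff_disj mult_right_mono)

lemma capped_scaling_exists:
  assumes "\<kappa> \<le> 1" and a: "\<forall>i\<in>{1..n}. 0 < a i \<and> a i \<le> \<kappa>"
  shows "\<exists>c\<ge>1. msize n (capped_scaling n c a) = \<kappa> * n"
proof -
  define g where "g c = (\<Sum>i\<in>{1..n}. min 1 (c * a i))" for c
  define C where "C = 1 + (\<Sum>i\<in>{1..n}. 1 / a i)"
  have "g 1 \<le> (\<Sum>i\<in>{1..n}. \<kappa>)"
    unfolding g_def by (intro sum_mono) (use a in \<open>auto simp: min_le_iff_disj\<close>)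
  then have g1: "g 1 \<le> \<kappa> * n" by (simp add: mult.commute)
  have C1: "1 \<le> C" unfolding C_def using a by (auto intro!: sum_nonneg)
  have "min 1 (C * a i) = 1" if i: "i \<in> {1..n}" for i
  proof -
    have "1 / a i \<le> (\<Sum>i\<in>{1..n}. 1 / a i)"
      by (rule member_le_sum) (use a i in \<open>auto simp: less_imp_le\<close>)
    then have "1 / a i \<le> C" by (simp add: C_def)
    then show ?thesis using a i by (simp add: field_simps)
  qed
  then have "g C = n" by (simp add: g_def)
  with \<open>\<kappa> \<le> 1\<close> have gC: "\<kappa> * n \<le> g C" using mult_right_mono[of \<kappa> 1 "real n"] by simp
  have "continuous_on {1..C} g" unfolding g_def by (intro continuous_intros)
  with IVT'[OF g1 gC C1] obtain c where "1 \<le> c" "g c = \<kappa> * n" by auto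
  then show ?thesis by (auto simp: msize_capped_scaling g_def)
qed

lemma ln_cap_ratio_mult_ge:
  fixes a c x :: real
  assumes "1 \<le> c" "0 < a" "x \<le> 1"
  shows "ln c * (x - min 1 (c * a)) \<le> ln (min 1 (c * a) / a) * (x - min 1 (c * a))"
proof (cases "c * a \<le> 1")
  case False
  then have "ln (1 / a) \<le> ln c" using assms by (simp add: field_simps)
  with False assms show ?thesis by (simp add: mult_right_mono_neg)
qed (use assms in simp)

lemma KL_capped_scaling_gap:
  assumes a: "\<forall>i\<in>{1..n}. 0 < a i" and c: "1 \<le> c"
    and \<mu>: "\<mu> \<in> measures n" and mass: "msize n (capped_scaling n c a) \<le> msize n \<mu>"
  shows "(\<Sum>i\<in>{1..n}. kl_point (\<mu> i) (capped_scaling n c a i))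
           \<le> KL n \<mu> a - KL n (capped_scaling n c a) a"
proof -
  let ?\<nu> = "capped_scaling n c a"
  have \<mu>_bounds: "0 \<le> \<mu> i \<and> \<mu> i \<le> 1" if "i \<in> {1..n}" for i
    using \<mu> that by (simp add: measures_def)
  have "(\<Sum>i\<in>{1..n}. kl_point (\<mu> i) (?\<nu> i))
      \<le> (\<Sum>i\<in>{1..n}. kl_point (\<mu> i) (?\<nu> i)) + ln c * (msize n \<mu> - msize n ?\<nu>)"
    using c mass by simp
  also have "\<dots> = (\<Sum>i\<in>{1..n}. kl_point (\<mu> i) (?\<nu> i) + ln c * (\<mu> i - ?\<nu> i))"
    by (simp add: msize_def sum.distrib sum_distrib_left sum_subtractf right_diff_distrib)
  also have "\<dots> \<le> (\<Sum>i\<in>{1..n}. kl_point (\<mu> i) (?\<nu> i) + ln (?\<nu> i / a i) * (\<mu> i - ?\<nu> i))"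
    by (intro sum_mono add_left_mono)
      (use a c \<mu>_bounds ln_cap_ratio_mult_ge in \<open>auto simp: capped_scaling_def\<close>)
  also have "\<dots> = KL n \<mu> a - KL n ?\<nu> a"
    unfolding KL_eq_sum_kl_point sum_subtractf[symmetric]
    by (intro sum.cong refl kl_point_diff[symmetric]) (use a c \<mu>_bounds in \<open>auto simp: capped_scaling_def\<close>)
  finally show ?thesis .
qed

lemma proj_Gamma_eq_capped_scaling:
  fixes \<kappa> :: real
  assumes n: "0 < n" and a: "\<forall>i\<in>{1..n}. 0 < a i" and c: "1 \<le> c"
    and mass: "msize n (capped_scaling n c a) = \<kappa> * n"
  shows "proj_Gamma n \<kappa> a = capped_scaling n c a"
proof (rule proj_Gamma_eqI)
  let ?\<nu> = "capped_scaling n c a"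
  have \<nu>_pos: "0 < ?\<nu> i" if "i \<in> {1..n}" for i
    using a c that by (simp add: capped_scaling_def)
  have \<nu>: "?\<nu> \<in> measures n"
    using a c by (intro capped_scaling_in_measures) auto
  then show "?\<nu> \<in> Gamma n \<kappa>"
    using n mass by (simp add: mem_Gamma_iff)
  fix \<mu> assume "\<mu> \<in> Gamma n \<kappa>"
  then have \<mu>: "\<mu> \<in> measures n" and "msize n ?\<nu> \<le> msize n \<mu>"
    using n mass by (auto simp: mem_Gamma_iff)
  then have gap: "(\<Sum>i\<in>{1..n}. kl_point (\<mu> i) (?\<nu> i)) \<le> KL n \<mu> a - KL n ?\<nu> a"
    using a c by (intro KL_capped_scaling_gap)
  have kl_nonneg: "0 \<le> kl_point (\<mu> i) (?\<nu> i)" if "i \<in> {1..n}" for i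
    using \<mu> \<nu>_pos that by (intro kl_point_nonneg) (auto simp: measures_def)
  then have "0 \<le> (\<Sum>i\<in>{1..n}. kl_point (\<mu> i) (?\<nu> i))"
    by (intro sum_nonneg)
  with gap show "KL n ?\<nu> a \<le> KL n \<mu> a" by linarith
  assume "KL n \<mu> a \<le> KL n ?\<nu> a"
  with gap have "(\<Sum>i\<in>{1..n}. kl_point (\<mu> i) (?\<nu> i)) = 0"
    using \<open>0 \<le> (\<Sum>i\<in>{1..n}. kl_point (\<mu> i) (?\<nu> i))\<close> by linarith
  then have "kl_point (\<mu> i) (?\<nu> i) = 0" if "i \<in> {1..n}" for i
    using kl_nonneg that by (subst (asm) sum_nonneg_eq_0_iff) auto
  then show "\<mu> = ?\<nu>"
    using \<mu> \<nu> \<nu>_pos by (intro measures_eqI kl_point_le_0_imp_eq) (auto simp: measures_def)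
qed

lemma abs_sum_subset_le:
  fixes d :: "'a \<Rightarrow> real"
  assumes "finite I" "A \<subseteq> I" "j \<in> I" "\<forall>i\<in>I - {j}. 0 \<le> d i" "sum d I = 0"
  shows "\<bar>sum d A\<bar> \<le> \<bar>d j\<bar>"
proof -
  have "finite A" using assms finite_subset by blast
  have total: "d j + sum d (I - {j}) = 0"
    using assms by (simp add: sum.remove)
  have lower: "0 \<le> sum d (A - {j})"
    using assms by (intro sum_nonneg) auto
  have upper: "sum d (A - {j}) \<le> sum d (I - {j})"
    using assms by (intro sum_mono2) auto
  show ?thesis
  proof (cases "j \<in> A")
    case True
    then have "sum d A = d j + sum d (A - {j})"
      using \<open>finite A\<close> by (simp add: sum.remove)
    then show ?thesis using total lower upper by linarith
  next
    case False
    then have "sum d A = sum d (A - {j})" by simp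
    then show ?thesis using total lower upper by linarith
  qed
qed

lemma stat_dist_commute: "stat_dist n p q = stat_dist n q p"
  by (simp add: stat_dist_def abs_minus_commute)

lemma stat_dist_leI:
  assumes "\<And>A. A \<subseteq> {1..n} \<Longrightarrow> \<bar>(\<Sum>i\<in>A. p i) - (\<Sum>i\<in>A. q i)\<bar> \<le> B"
  shows "stat_dist n p q \<le> B"
  unfolding stat_dist_def using assms by (intro Max.boundedI) auto


lemma stat_dist_normalize_le:
  assumes mass: "msize n \<nu>' = msize n \<nu>" "0 < msize n \<nu>"
    and j: "j \<in> {1..n}" and dominated: "\<forall>i\<in>{1..n} - {j}. \<nu>' i \<le> \<nu> i"
  shows "stat_dist n (normalize n \<nu>) (normalize n \<nu>') \<le> \<bar>\<nu> j - \<nu>' j\<bar> / msize n \<nu>"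
proof (rule stat_dist_leI)
  fix A assume A: "A \<subseteq> {1..n}"
  have "\<bar>\<Sum>i\<in>A. \<nu> i - \<nu>' i\<bar> \<le> \<bar>\<nu> j - \<nu>' j\<bar>"
    using A j dominated mass(1)
    by (intro abs_sum_subset_le[where I = "{1..n}"]) (auto simp: msize_def sum_subtractf)
  with mass show "\<bar>(\<Sum>i\<in>A. normalize n \<nu> i) - (\<Sum>i\<in>A. normalize n \<nu>' i)\<bar>
      \<le> \<bar>\<nu> j - \<nu>' j\<bar> / msize n \<nu>"
    by (simp add: normalize_def sum_divide_distrib[symmetric] diff_divide_distrib[symmetric]
        sum_subtractf divide_right_mono)
qed

lemma stat_dist_capped_scaling_le:
  assumes a: "\<forall>i\<in>{1..n}. 0 < a i" and a': "\<forall>i\<in>{1..n}. 0 < a' i"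
    and j: "j \<in> {1..n}" and agree: "\<forall>i\<in>{1..n} - {j}. a' i = a i"
    and c: "1 \<le> c" and c': "1 \<le> c'"
    and mass: "msize n (capped_scaling n c a) = M" "msize n (capped_scaling n c' a') = M" "0 < M"
  shows "stat_dist n (normalize n (capped_scaling n c a)) (normalize n (capped_scaling n c' a'))
           \<le> 1 / M"
proof -
  have one_sided: "stat_dist n (normalize n \<nu>) (normalize n \<nu>') \<le> 1 / M"
    if "msize n \<nu> = M" "msize n \<nu>' = M" "\<forall>i\<in>{1..n} - {j}. \<nu>' i \<le> \<nu> i"
      and "\<bar>\<nu> j - \<nu>' j\<bar> \<le> 1" for \<nu> \<nu>'
  proof -
    have "stat_dist n (normalize n \<nu>) (normalize n \<nu>') \<le> \<bar>\<nu> j - \<nu>' j\<bar> / M"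
      using stat_dist_normalize_le[of n \<nu>' \<nu> j] that j \<open>0 < M\<close> by simp
    also have "\<dots> \<le> 1 / M"
      using that \<open>0 < M\<close> by (simp add: divide_right_mono)
    finally show ?thesis .
  qed
  have jump: "\<bar>capped_scaling n c a j - capped_scaling n c' a' j\<bar> \<le> 1"
  proof -
    have "0 \<le> c * a j" "0 \<le> c' * a' j"
      using a a' c c' j by (simp_all add: less_imp_le)
    then show ?thesis using j by (simp add: capped_scaling_def abs_le_iff min_def)
  qed
  consider "c' \<le> c" | "c \<le> c'" by linarith
  then show ?thesis
  proof cases
    case 1
    then show ?thesis
      using a agree mass jump by (intro one_sided) (auto intro!: capped_scaling_mono)
  next
    case 2
    then show ?thesis
      using a agree mass jump by (subst stat_dist_commute, intro one_sided)
        (auto simp: abs_minus_commute intro!: capped_scaling_mono)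
  qed
qed


lemma neighboring_agree_off_point:
  assumes "neighboring n S S'" "0 < n"
  obtains j where "j \<in> {1..n}" "\<forall>i\<in>{1..n} - {j}. S i = S' i"
proof (cases "\<exists>k\<in>{1..n}. S k \<noteq> S' k")
  case True
  then obtain k where k: "k \<in> {1..n}" "S k \<noteq> S' k" by blast
  have "\<forall>i\<in>{i\<in>{1..n}. S i \<noteq> S' i}. \<forall>i'\<in>{i\<in>{1..n}. S i \<noteq> S' i}. i = i'"
    using assms(1) by (simp add: neighboring_def card_le_Suc0_iff_eq)
  with k show ?thesis by (intro that[of k]) auto
qed (use assms in \<open>auto intro: that[of 1]\<close>)

definition nxm_loss :: "('x \<Rightarrow> real) \<Rightarrow> 'x \<times> real \<Rightarrow> real" where
  "nxm_loss h p = 1 - \<bar>h (fst p) - snd p\<bar> / 2"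

definition nxm_weights ::
    "real \<Rightarrow> real \<Rightarrow> nat \<Rightarrow> (nat \<Rightarrow> 'x \<times> real) \<Rightarrow> ('x \<Rightarrow> real) list \<Rightarrow> nat \<Rightarrow> real" where
  "nxm_weights \<kappa> lam n S hs i =
    (if i \<in> {1..n} then \<kappa> * exp (- lam * (\<Sum>h\<leftarrow>hs. nxm_loss h (S i))) else 0)"

lemma LB_NxM_eq_normalize_proj_Gamma:
  "LB_NxM \<kappa> lam n S hs = normalize n (proj_Gamma n \<kappa> (nxm_weights \<kappa> lam n S hs))"
  unfolding LB_NxM_def Let_def nxm_weights_def nxm_loss_def ..

lemma nxm_loss_nonneg:
  assumes "snd p \<in> {-1, 1}" "-1 \<le> h (fst p)" "h (fst p) \<le> 1"
  shows "0 \<le> nxm_loss h p"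
  using assms by (auto simp: nxm_loss_def abs_le_iff)

lemma nxm_weights_bounds:
  assumes "valid_sample n S" "\<forall>h\<in>set hs. \<forall>x. -1 \<le> h x \<and> h x \<le> 1"
    and "0 < \<kappa>" "0 \<le> lam" "i \<in> {1..n}"
  shows "0 < nxm_weights \<kappa> lam n S hs i \<and> nxm_weights \<kappa> lam n S hs i \<le> \<kappa>"
proof -
  have "0 \<le> (\<Sum>h\<leftarrow>hs. nxm_loss h (S i))"
    using assms by (intro sum_list_nonneg) (auto simp: valid_sample_def intro!: nxm_loss_nonneg)
  then have "exp (- lam * (\<Sum>h\<leftarrow>hs. nxm_loss h (S i))) \<le> 1"
    using \<open>0 \<le> lam\<close> by simp
  then show ?thesis
    using assms by (simp add: nxm_weights_def)
qed

theorem mainTheorem4: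
  fixes \<kappa> lam :: real and n :: nat
    and S S' :: "nat \<Rightarrow> 'x \<times> real" and hs :: "('x \<Rightarrow> real) list"
  assumes "0 < \<kappa>" "\<kappa> < 1" "0 < lam" "lam < 1"
    and "valid_sample n S" "valid_sample n S'"
    and "neighboring n S S'"
    and "\<forall>h\<in>set hs. \<forall>x. -1 \<le> h x \<and> h x \<le> 1"
  shows "stat_dist n (LB_NxM \<kappa> lam n S hs) (LB_NxM \<kappa> lam n S' hs) \<le> 1 / (\<kappa> * real n)"
proof (cases "n = 0")
  case True
  then show ?thesis by (simp add: stat_dist_def)
next
  case False
  then have n: "0 < n" by simp
  with assms obtain j where j: "j \<in> {1..n}" and agree: "\<forall>i\<in>{1..n} - {j}. S i = S' i"
    by (auto elim: neighboring_agree_off_point)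
  define w where "w = nxm_weights \<kappa> lam n S hs"
  define w' where "w' = nxm_weights \<kappa> lam n S' hs"
  have w: "\<forall>i\<in>{1..n}. 0 < w i \<and> w i \<le> \<kappa>" and w': "\<forall>i\<in>{1..n}. 0 < w' i \<and> w' i \<le> \<kappa>"
    unfolding w_def w'_def using assms by (simp_all add: nxm_weights_bounds less_imp_le)
  obtain c c' where c: "1 \<le> c" "msize n (capped_scaling n c w) = \<kappa> * n"
    and c': "1 \<le> c'" "msize n (capped_scaling n c' w') = \<kappa> * n"
    using capped_scaling_exists[OF _ w] capped_scaling_exists[OF _ w'] \<open>\<kappa> < 1\<close> by fastforce
  have "\<forall>i\<in>{1..n} - {j}. w' i = w i"
    using agree by (simp add: w_def w'_def nxm_weights_def)
  then have "stat_dist n (normalize n (capped_scaling n c w)) (normalize n (capped_scaling n c' w'))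
      \<le> 1 / (\<kappa> * n)"
    using w w' j c c' n \<open>0 < \<kappa>\<close> by (intro stat_dist_capped_scaling_le) auto
  moreover have "proj_Gamma n \<kappa> w = capped_scaling n c w"
    using n w c by (intro proj_Gamma_eq_capped_scaling) auto
  moreover have "proj_Gamma n \<kappa> w' = capped_scaling n c' w'"
    using n w' c' by (intro proj_Gamma_eq_capped_scaling) auto
  ultimately show ?thesis
    by (simp add: LB_NxM_eq_normalize_proj_Gamma w_def w'_def)
qed

end
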